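(* Let $a<b$ and let $\mu$ be a probability distribution function constant on the complement of $[a,b]$. Let $\theta_1<\cdots<\theta_k$ and $d_1,\dots,d_k$ be the nodes and weights of the $k$-point Gaussian quadrature rule $\mathrm{GQ}_k(\mu)$, and set $\theta_0=a$, $\theta_{k+1}=b$, $d_0=d_{k+1}=0$. Then $$d_{\mathrm{KS}}(\mu,\mathrm{GQ}_k(\mu))\le\max_{j=1,\dots,k}d_j,\qquad d_{\mathrm{W}}(\mu,\mathrm{GQ}_k(\mu))\le\sum_{j=0}^{k}\max\{d_j,d_{j+1}\}(\theta_{j+1}-\theta_j).$$
   Context: For a probability distribution function $\mu$ with finite moments up to degree $2k-1$, the $k$-point Gaussian quadrature rule $\mathrm{GQ}_k(\mu)$ is the distribution function $\sum_{j=1}^k d_j\mathbb{1}[\theta_j\le x]$ with nodes $\theta_j$ and nonnegative weights $d_j$ such that $\int p\,d\mu=\int p\,d\mathrm{GQ}_k(\mu)$ for all polynomials $p$ of degree $\le2k-1$. $d_{\mathrm{KS}}(\mu,\nu)=\sup_x|\mu(x)-\nu(x)|$ and $d_{\mathrm{W}}(\mu,\nu)=\int|\mu(x)-\nu(x)|\,dx$. *)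

theory Defs
  imports "HOL-Analysis.Analysis" "HOL-Computational_Algebra.Polynomial"
begin

definition is_distribution_function :: "(real \<Rightarrow> real) \<Rightarrow> bool" where
  "is_distribution_function F \<longleftrightarrow>
     mono F \<and> (\<forall>x. continuous (at_right x) F) \<and>
     (F \<longlongrightarrow> 0) at_bot \<and> (F \<longlongrightarrow> 1) at_top"

abbreviation ls_measure :: "(real \<Rightarrow> real) \<Rightarrow> real measure" where
  "ls_measure F \<equiv> interval_measure F"

definition quad_df :: "nat \<Rightarrow> (nat \<Rightarrow> real) \<Rightarrow> (nat \<Rightarrow> real) \<Rightarrow> real \<Rightarrow> real" where
  "quad_df k \<theta> d x = (\<Sum>j\<in>{1..k}. d j * (if \<theta> j \<le> x then 1 else 0))"

definition is_GQ :: "nat \<Rightarrow> (real \<Rightarrow> real) \<Rightarrow> (nat \<Rightarrow> real) \<Rightarrow> (nat \<Rightarrow> real) \<Rightarrow> bool" where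
  "is_GQ k \<mu> \<theta> d \<longleftrightarrow>
     (\<forall>i j. 1 \<le> i \<longrightarrow> i < j \<longrightarrow> j \<le> k \<longrightarrow> \<theta> i < \<theta> j) \<and>
     (\<forall>j\<in>{1..k}. 0 \<le> d j) \<and>
     (\<forall>m. m \<le> 2*k - 1 \<longrightarrow> integrable (ls_measure \<mu>) (\<lambda>x. x ^ m)) \<and>
     (\<forall>p :: real poly. degree p \<le> 2*k - 1 \<longrightarrow>
        integral\<^sup>L (ls_measure \<mu>) (poly p) = (\<Sum>j\<in>{1..k}. d j * poly p (\<theta> j)))"

definition d_KS :: "(real \<Rightarrow> real) \<Rightarrow> (real \<Rightarrow> real) \<Rightarrow> real" where
  "d_KS F G = (SUP x. \<bar>F x - G x\<bar>)"

definition d_W :: "(real \<Rightarrow> real) \<Rightarrow> (real \<Rightarrow> real) \<Rightarrow> ennreal" where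
  "d_W F G = (\<integral>\<^sup>+ x. ennreal \<bar>F x - G x\<bar> \<partial>lborel)"

end

theory Submission
  imports Defs "HOL-Computational_Algebra.Polynomial_Factorial"
    "HOL-Computational_Algebra.Field_as_Ring" "HOL-Probability.Probability"
begin

(* Let F be the distribution function of mu and G that of its Gaussian rule.  By the
   Chebyshev-Markov-Stieltjes inequalities
     d_1 + ... + d_(j-1) <= F(theta_j -)   and   F(theta_j) <= d_1 + ... + d_j,
   so |F - G| <= max(d_j, d_(j+1)) on [theta_j, theta_(j+1)).  For the upper inequality the rule
   integrates exactly a polynomial p of degree 2k-2 that lies above the indicator of
   (-inf, theta_j] and agrees with it at the nodes: the Hermite interpolant of these values with
   p' = 0 at every node except theta_j.  Rolle's theorem gives a zero of p' in every gap except
   (theta_j, theta_(j+1)); with the nodes these are all 2k-3 zeros of p', which fixes the sign of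
   p' and hence the shape of p.  Reflecting the nodes gives the lower inequality.  Outside [a, b]
   F = G, since nodes of positive weight lie in [a, b]; integrating the pointwise bound over
   [a, b] gives the Wasserstein estimate. *)

section \<open>Polynomials above step functions\<close>

lemma poly_and_pderiv_eq_0_if_square_dvd:
  fixes q :: "'a::idom poly"
  assumes "[:-s, 1:]^2 dvd q"
  shows "poly q s = 0" "poly (pderiv q) s = 0"
proof -
  obtain r where r: "q = [:-s, 1:]^2 * r" using assms by blast
  have "pderiv ([:-s, 1:]^2) = smult 2 [:-s, 1:]"
    by (simp add: power2_eq_square pderiv_mult pderiv_pCons)
  then show "poly q s = 0" "poly (pderiv q) s = 0"
    by (simp_all add: r pderiv_mult)
qed

lemma prod_linear_dvd_if_roots:
  fixes q :: "'a::idom poly"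
  assumes "finite Z" "\<And>z. z \<in> Z \<Longrightarrow> poly q z = 0"
  shows "(\<Prod>z\<in>Z. [:-z, 1:]) dvd q"
  using assms
proof (induction Z rule: finite_induct)
  case empty
  then show ?case by simp
next
  case (insert z Z)
  then obtain r where r: "q = (\<Prod>z\<in>Z. [:-z, 1:]) * r" by auto
  have "poly (\<Prod>z\<in>Z. [:-z, 1:]) z \<noteq> 0"
    using insert.hyps by (auto simp: poly_prod)
  then have "poly r z = 0" using insert.prems[of z] by (simp add: r)
  then obtain r' where "r = [:-z, 1:] * r'" by (auto simp: poly_eq_0_iff_dvd)
  then have "q = ([:-z, 1:] * (\<Prod>z\<in>Z. [:-z, 1:])) * r'" by (simp only: r mult_ac)
  then show ?case using insert.hyps by simp
qed

lemma poly_eq_const_mult_prod_roots: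
  fixes q :: "'a::idom poly"
  assumes "finite Z" "\<And>z. z \<in> Z \<Longrightarrow> poly q z = 0" "degree q \<le> card Z"
  obtains c where "\<And>x. poly q x = c * (\<Prod>z\<in>Z. x - z)"
proof -
  obtain r where r: "q = (\<Prod>z\<in>Z. [:-z, 1:]) * r"
    using prod_linear_dvd_if_roots[OF assms(1,2)] by blast
  have "degree r = 0"
  proof (cases "r = 0")
    case False
    have "degree (\<Prod>z\<in>Z. [:-z, 1:]) = card Z"
      by (subst degree_prod_sum_eq) simp_all
    then show ?thesis
      using assms(3) False by (simp add: r degree_mult_eq prod_zero_iff[OF assms(1)])
  qed simp
  then obtain c where "r = [:c:]" by (rule degree_eq_zeroE)
  then show ?thesis by (intro that[of c]) (simp add: r poly_prod mult.commute)
qed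

lemma coprime_poly_interpolation:
  fixes A B :: "'a::field_gcd poly"
  assumes "coprime A B" "0 < degree B"
  obtains p where "A dvd p - 1" "B dvd p" "degree p < degree A + degree B"
proof -
  obtain u v where uv: "u * A + v * B = 1"
    using bezout_coefficients_fst_snd[of A B] assms(1) by (metis coprime_iff_gcd_eq_1)
  define r where "r = (-u) mod B"
  define s where "s = (-u) div B"
  have "r = -u - s * B" unfolding r_def s_def by (rule minus_div_mult_eq_mod[symmetric])
  then have "1 + A * r = B * (v - A * s)"
    by (simp only:) (simp add: uv[symmetric] algebra_simps)
  then have "B dvd 1 + A * r" by simp
  have "B \<noteq> 0" using assms(2) by auto
  then have "degree r < degree B"
    using degree_mod_less[of B "-u"] assms(2) by (cases "r = 0") (auto simp: r_def)
  then have "degree (1 + A * r) < degree A + degree B"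
    using degree_mult_le[of A r] degree_add_le_max[of 1 "A * r"] assms(2) by simp
  with \<open>B dvd 1 + A * r\<close> show ?thesis by (intro that[of "1 + A * r"]) simp_all
qed

lemma coprime_linear_poly:
  fixes a b :: "'a::field_gcd"
  assumes "a \<noteq> b"
  shows "coprime [:-a, 1:] [:-b, 1:]"
proof (rule prime_elem_imp_coprime)
  show "prime_elem [:-a, 1:]" by (rule prime_elem_linear_field_poly) simp
  show "\<not> [:-a, 1:] dvd [:-b, 1:]" using assms by (simp flip: poly_eq_0_iff_dvd)
qed

lemma hermite_step_poly:
  fixes t :: "nat \<Rightarrow> 'a::field_gcd"
  assumes t: "inj_on t {1..k}" and j: "1 \<le> j" "j < k"
  obtains p where "degree p \<le> 2*k - 2"
    "\<And>i. i \<in> {1..k} \<Longrightarrow> poly p (t i) = of_bool (i \<le> j)"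
    "\<And>i. i \<in> {1..k} - {j} \<Longrightarrow> poly (pderiv p) (t i) = 0"
proof -
  define A where "A = [:-t j, 1:] * (\<Prod>i\<in>{1..<j}. [:-t i, 1:]^2)"
  define B where "B = (\<Prod>i\<in>{j<..k}. [:-t i, 1:]^2)"
  have "coprime [:-t i, 1:] [:-t i', 1:]" if "i \<in> {1..j}" "i' \<in> {j<..k}" for i i'
    using that inj_onD[OF t, of i i'] j by (intro coprime_linear_poly) auto
  then have "coprime A B"
    unfolding A_def B_def coprime_mult_left_iff
    using j by (intro conjI prod_coprime_left prod_coprime_right) auto
  moreover have deg_B: "degree B = 2 * (k - j)"
    unfolding B_def by (subst degree_prod_sum_eq) (simp_all add: degree_linear_power)
  ultimately obtain p where p: "A dvd p - 1" "B dvd p" "degree p < degree A + degree B"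
    using j by (elim coprime_poly_interpolation) auto
  have "degree A = 2 * j - 1"
    unfolding A_def using j
    by (subst degree_mult_eq) (simp_all add: degree_prod_sum_eq degree_linear_power)
  then have "degree p \<le> 2*k - 2" using p(3) deg_B j by linarith
  moreover have sq_A: "[:-t i, 1:]^2 dvd p - 1" if "i \<in> {1..<j}" for i
  proof -
    have "[:-t i, 1:]^2 dvd A" unfolding A_def using that by (intro dvd_mult dvd_prodI) auto
    then show ?thesis using p(1) by (rule dvd_trans)
  qed
  moreover have sq_B: "[:-t i, 1:]^2 dvd p" if "i \<in> {j<..k}" for i
  proof -
    have "[:-t i, 1:]^2 dvd B" unfolding B_def using that by (intro dvd_prodI) auto
    then show ?thesis using p(2) by (rule dvd_trans)
  qed
  moreover have "poly (p - 1) (t j) = 0"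
    using p(1) unfolding A_def poly_eq_0_iff_dvd by (rule dvd_mult_left)
  ultimately show ?thesis
  proof (intro that)
    fix i assume i: "i \<in> {1..k}"
    show "poly p (t i) = of_bool (i \<le> j)"
    proof (cases "i \<le> j")
      case True
      then have "poly (p - 1) (t i) = 0"
        using i \<open>poly (p - 1) (t j) = 0\<close> poly_and_pderiv_eq_0_if_square_dvd(1)[OF sq_A]
        by (cases "i = j") auto
      then show ?thesis using True by simp
    next
      case False
      then show ?thesis using i poly_and_pderiv_eq_0_if_square_dvd(1)[OF sq_B] by simp
    qed
  next
    fix i assume i: "i \<in> {1..k} - {j}"
    show "poly (pderiv p) (t i) = 0"
    proof (cases "i < j")
      case True
      then show ?thesis
        using i poly_and_pderiv_eq_0_if_square_dvd(2)[OF sq_A] by (simp add: pderiv_diff)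
    next
      case False
      then show ?thesis using i poly_and_pderiv_eq_0_if_square_dvd(2)[OF sq_B] by simp
    qed
  qed
qed

text \<open>\<open>in_gap k t i x\<close>: exactly the nodes \<open>t 1, ..., t i\<close> lie at or below \<open>x\<close>; the gaps
  \<open>i = 0\<close> and \<open>i = k\<close> are the unbounded ones before the first and after the last node.\<close>

definition in_gap :: "nat \<Rightarrow> (nat \<Rightarrow> 'a::linorder) \<Rightarrow> nat \<Rightarrow> 'a \<Rightarrow> bool" where
  "in_gap k t i x \<longleftrightarrow> i \<le> k \<and> (1 \<le> i \<longrightarrow> t i \<le> x) \<and> (i < k \<longrightarrow> x < t (Suc i))"

lemma ex_in_gap: "\<exists>i. in_gap k t i x"
proof -
  define I where "I = {i\<in>{1..k}. t i \<le> x}"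
  show ?thesis
  proof (cases "I = {}")
    case True
    then have "1 \<notin> I" by blast
    then show ?thesis by (intro exI[of _ 0]) (auto simp: I_def in_gap_def)
  next
    case False
    have "finite I" by (simp add: I_def)
    with False have "Max I \<in> I" "Suc (Max I) \<notin> I" by (auto dest: Max_ge)
    then show ?thesis by (intro exI[of _ "Max I"]) (auto simp: I_def in_gap_def)
  qed
qed

lemma node_le_iff_in_gap:
  fixes t :: "nat \<Rightarrow> 'a::linorder"
  assumes t: "strict_mono_on {1..k} t" and gap: "in_gap k t i x" and i': "i' \<in> {1..k}"
  shows "t i' \<le> x \<longleftrightarrow> i' \<le> i"
proof
  assume "t i' \<le> x"
  show "i' \<le> i"
  proof (rule ccontr)
    assume "\<not> i' \<le> i"
    then have "t (Suc i) \<le> t i'"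
      using gap i' by (intro strict_mono_on_leD[OF t]) (auto simp: in_gap_def)
    then show False using \<open>t i' \<le> x\<close> \<open>\<not> i' \<le> i\<close> gap i' by (fastforce simp: in_gap_def)
  qed
next
  assume "i' \<le> i"
  then have "t i' \<le> t i" using gap i' by (intro strict_mono_on_leD[OF t]) (auto simp: in_gap_def)
  then show "t i' \<le> x" using \<open>i' \<le> i\<close> gap i' by (fastforce simp: in_gap_def)
qed

lemma poly_mono_if_pderiv_nonneg:
  fixes p :: "real poly"
  assumes "u \<le> v" "\<And>y. u < y \<Longrightarrow> y < v \<Longrightarrow> 0 \<le> poly (pderiv p) y"
  shows "poly p u \<le> poly p v"
  by (rule DERIV_nonneg_imp_increasing_open[of u v "poly p"])
    (use assms in \<open>auto intro: poly_DERIV continuous_on_poly continuous_on_id\<close>)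

lemma poly_antimono_if_pderiv_nonpos:
  fixes p :: "real poly"
  assumes "u \<le> v" "\<And>y. u < y \<Longrightarrow> y < v \<Longrightarrow> poly (pderiv p) y \<le> 0"
  shows "poly p v \<le> poly p u"
  by (rule DERIV_nonpos_imp_decreasing_open[of u v "poly p"])
    (use assms in \<open>auto intro: poly_DERIV continuous_on_poly continuous_on_id\<close>)

lemma interlacing_strict_mono_disjoint:
  fixes t \<xi> :: "nat \<Rightarrow> 'a::linorder"
  assumes t: "strict_mono_on {1..k} t" and S: "S \<subseteq> {1..<k}"
    and \<xi>: "\<And>i. i \<in> S \<Longrightarrow> t i < \<xi> i \<and> \<xi> i < t (Suc i)"
  shows "strict_mono_on S \<xi>" "t ` {1..k} \<inter> \<xi> ` S = {}"
proof -
  have \<xi>_less: "\<xi> i < t i'" if "i \<in> S" "i' \<in> {1..k}" "i < i'" for i i'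
    using \<xi>[of i] strict_mono_on_leD[OF t, of "Suc i" i'] that S by fastforce
  have less_\<xi>: "t i' < \<xi> i" if "i \<in> S" "i' \<in> {1..k}" "i' \<le> i" for i i'
    using \<xi>[of i] strict_mono_on_leD[OF t, of i' i] that S by fastforce
  show "strict_mono_on S \<xi>"
  proof (rule strict_mono_onI)
    fix i i' assume "i \<in> S" "i' \<in> S" "i < i'"
    moreover have "i' \<in> {1..k}" using \<open>i' \<in> S\<close> S by auto
    ultimately have "\<xi> i < t i'" "t i' < \<xi> i'" by (auto intro: \<xi>_less less_\<xi>)
    then show "\<xi> i < \<xi> i'" by (rule less_trans)
  qed
  show "t ` {1..k} \<inter> \<xi> ` S = {}"
  proof (intro equalityI subsetI)
    fix z assume "z \<in> t ` {1..k} \<inter> \<xi> ` S"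
    then obtain i i' where i: "i \<in> S" "i' \<in> {1..k}" and "z = t i'" "z = \<xi> i" by blast
    then show "z \<in> {}"
      using \<xi>_less[OF i] less_\<xi>[OF i] by (cases "i < i'") auto
  qed simp
qed

lemma interlacing_prod_in_gap:
  fixes t \<xi> :: "nat \<Rightarrow> real"
  assumes t: "strict_mono_on {1..k} t" and S: "S \<subseteq> {1..<k}"
    and \<xi>: "\<And>i. i \<in> S \<Longrightarrow> t i < \<xi> i \<and> \<xi> i < t (Suc i)"
    and gap: "in_gap k t i y"
  obtains N where "0 \<le> N"
    "(\<Prod>i'\<in>S. (y - t i') * (y - \<xi> i')) = (if i \<in> S then (y - t i) * (y - \<xi> i) else 1) * N"
proof -
  have "0 \<le> (\<Prod>i'\<in>S - {i}. (y - t i') * (y - \<xi> i'))"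
  proof (rule prod_nonneg)
    fix i' assume i': "i' \<in> S - {i}"
    then have "i' \<in> {1..k}" "Suc i' \<in> {1..k}" "t i' < \<xi> i'" "\<xi> i' < t (Suc i')"
      using S \<xi> by auto
    then show "0 \<le> (y - t i') * (y - \<xi> i')"
      using node_le_iff_in_gap[OF t gap] i'
      by (cases "i' < i") (force intro: mult_nonneg_nonneg, force intro: mult_nonpos_nonpos)
  qed
  moreover have "finite S" using S finite_subset by blast
  then have "(\<Prod>i'\<in>S. (y - t i') * (y - \<xi> i'))
      = (if i \<in> S then (y - t i) * (y - \<xi> i) else 1) * (\<Prod>i'\<in>S - {i}. (y - t i') * (y - \<xi> i'))"
    by (simp add: prod.remove)
  ultimately show ?thesis by (rule that)
qed

context
  fixes t :: "nat \<Rightarrow> real" and p :: "real poly" and k j :: nat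
  assumes nodes: "strict_mono_on {1..k} t" and j: "1 \<le> j" "j < k"
    and deg: "degree p \<le> 2*k - 2"
    and val: "\<And>i. i \<in> {1..k} \<Longrightarrow> poly p (t i) = of_bool (i \<le> j)"
    and crit: "\<And>i. i \<in> {1..k} - {j} \<Longrightarrow> poly (pderiv p) (t i) = 0"
begin

text \<open>Besides the \<open>k - 1\<close> nodes other than \<open>t j\<close>, Rolle's theorem gives a zero \<open>\<xi> i\<close> of \<open>p'\<close>
  in each gap \<open>(t i, t (i + 1))\<close> with \<open>i \<noteq> j\<close>; these \<open>2k - 3\<close> zeros determine \<open>p'\<close> up to a
  constant factor.\<close>

lemma hermite_step_pderiv_eq:
  obtains \<xi> c where "\<And>i. i \<in> {1..<k} - {j} \<Longrightarrow> t i < \<xi> i \<and> \<xi> i < t (Suc i)"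
    "\<And>x. poly (pderiv p) x = c * (x - t k) * (\<Prod>i\<in>{1..<k} - {j}. (x - t i) * (x - \<xi> i))"
proof -
  define S where "S = {1..<k} - {j}"
  have "\<exists>z. t i < z \<and> z < t (Suc i) \<and> poly (pderiv p) z = 0" if "i \<in> S" for i
  proof -
    have "t i < t (Suc i)" using that by (intro strict_mono_onD[OF nodes]) (auto simp: S_def)
    moreover have "poly p (t (Suc i)) = poly p (t i)" using that val by (auto simp: S_def)
    ultimately show ?thesis using poly_MVT[of "t i" "t (Suc i)" p] by auto
  qed
  then obtain \<xi> where \<xi>: "\<And>i. i \<in> S \<Longrightarrow> t i < \<xi> i \<and> \<xi> i < t (Suc i) \<and> poly (pderiv p) (\<xi> i) = 0"
    by metis
  have S: "S \<subseteq> {1..<k}" and fin: "finite S" by (auto simp: S_def)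
  have inj_t: "inj_on t S"
    by (rule inj_on_subset[OF strict_mono_on_imp_inj_on[OF nodes]]) (use S in auto)
  have inj_\<xi>: "inj_on \<xi> S" and disj: "t ` {1..k} \<inter> \<xi> ` S = {}"
    using interlacing_strict_mono_disjoint[OF nodes S] \<xi> by (auto intro: strict_mono_on_imp_inj_on)
  define Z where "Z = insert (t k) (t ` S \<union> \<xi> ` S)"
  have "t k \<notin> t ` S"
    using strict_mono_onD[OF nodes, of _ k] S j by (fastforce simp: S_def)
  moreover have "t ` S \<subseteq> t ` {1..k}" "t k \<in> t ` {1..k}" using S j by auto
  then have "t k \<notin> \<xi> ` S" "t ` S \<inter> \<xi> ` S = {}" using disj by blast+
  ultimately have prod_Z: "(\<Prod>z\<in>Z. f z) = f (t k) * (\<Prod>i\<in>S. f (t i) * f (\<xi> i))"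
    and card_Z: "card Z = 1 + 2 * card S" for f :: "real \<Rightarrow> real"
    using inj_t inj_\<xi> fin unfolding Z_def
    by (simp_all add: prod.union_disjoint prod.reindex prod.distrib card_Un_disjoint card_image)
  have "card S = k - 2" using j by (simp add: S_def)
  then have deg': "degree (pderiv p) \<le> card Z"
    using deg card_Z j by (simp add: degree_pderiv)
  have roots: "poly (pderiv p) z = 0" if "z \<in> Z" for z
  proof -
    have "poly (pderiv p) (t i) = 0" if "i \<in> insert k S" for i
      using that j by (intro crit) (auto simp: S_def)
    then show ?thesis using that \<xi> unfolding Z_def by blast
  qed
  obtain c where c: "\<And>x. poly (pderiv p) x = c * (\<Prod>z\<in>Z. x - z)"
    using poly_eq_const_mult_prod_roots[OF _ roots deg'] fin unfolding Z_def by blast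
  have "poly (pderiv p) x = c * (x - t k) * (\<Prod>i\<in>S. (x - t i) * (x - \<xi> i))" for x
    using c[of x] prod_Z[of "\<lambda>z. x - z"] by (simp add: mult.assoc)
  with \<xi> show ?thesis unfolding S_def by (intro that) auto
qed

lemma hermite_step_pderiv_factor_pos:
  assumes \<xi>: "\<And>i. i \<in> {1..<k} - {j} \<Longrightarrow> t i < \<xi> i \<and> \<xi> i < t (Suc i)"
    and p': "\<And>x. poly (pderiv p) x = c * (x - t k) * (\<Prod>i\<in>{1..<k} - {j}. (x - t i) * (x - \<xi> i))"
  shows "0 < c"
proof (rule ccontr)
  assume "\<not> 0 < c"
  have "t j < t (Suc j)" using j by (intro strict_mono_onD[OF nodes]) auto
  then obtain z where z: "t j < z" "z < t (Suc j)"
    and "poly p (t (Suc j)) - poly p (t j) = (t (Suc j) - t j) * poly (pderiv p) z"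
    using poly_MVT by blast
  moreover have "poly p (t (Suc j)) - poly p (t j) = -1" using val j by simp
  ultimately have "(t (Suc j) - t j) * poly (pderiv p) z < 0" by simp
  then have p'_z: "poly (pderiv p) z < 0" using \<open>t j < t (Suc j)\<close> by (simp add: mult_less_0_iff)
  have "in_gap k t j z" using j z by (simp add: in_gap_def)
  with interlacing_prod_in_gap[OF nodes Diff_subset \<xi>] obtain N where N: "0 \<le> N"
    "(\<Prod>i\<in>{1..<k} - {j}. (z - t i) * (z - \<xi> i))
      = (if j \<in> {1..<k} - {j} then (z - t j) * (z - \<xi> j) else 1) * N"
    by blast
  have "t (Suc j) \<le> t k" using j by (intro strict_mono_on_leD[OF nodes]) auto
  then have "0 \<le> c * (z - t k)" using \<open>\<not> 0 < c\<close> z by (intro mult_nonpos_nonpos) auto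
  then have "0 \<le> c * (z - t k) * N" using N(1) by (rule mult_nonneg_nonneg)
  then show False using p'_z p'[of z] N(2) by simp
qed

lemma hermite_step_pderiv_sign:
  assumes \<xi>: "\<And>i. i \<in> {1..<k} - {j} \<Longrightarrow> t i < \<xi> i \<and> \<xi> i < t (Suc i)"
    and p': "\<And>x. poly (pderiv p) x = c * (x - t k) * (\<Prod>i\<in>{1..<k} - {j}. (x - t i) * (x - \<xi> i))"
    and gap: "in_gap k t i y"
  shows hermite_step_pderiv_nonneg_in_gap:
      "i = k \<or> i \<in> {1..<k} - {j} \<and> y \<le> \<xi> i \<Longrightarrow> 0 \<le> poly (pderiv p) y"
    and hermite_step_pderiv_nonpos_in_gap:
      "i < k \<Longrightarrow> (i \<in> {1..<k} - {j} \<Longrightarrow> \<xi> i \<le> y) \<Longrightarrow> poly (pderiv p) y \<le> 0"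
proof -
  define S where "S = {1..<k} - {j}"
  define g where "g = (if i \<in> S then (y - t i) * (y - \<xi> i) else 1)"
  have "S \<subseteq> {1..<k}" by (auto simp: S_def)
  with interlacing_prod_in_gap[OF nodes _ \<xi>[folded S_def] gap] obtain N where
    "0 \<le> N" "(\<Prod>i'\<in>S. (y - t i') * (y - \<xi> i')) = g * N"
    unfolding g_def by blast
  moreover have "poly (pderiv p) y = c * (y - t k) * (\<Prod>i'\<in>S. (y - t i') * (y - \<xi> i'))"
    using p' by (simp add: S_def)
  ultimately have N: "0 \<le> N" "poly (pderiv p) y = c * (y - t k) * g * N"
    by (simp_all add: mult.assoc)
  have c: "0 < c" by (rule hermite_step_pderiv_factor_pos[OF \<xi> p'])
  have "t (Suc i) \<le> t k" if "i < k"
    using that by (intro strict_mono_on_leD[OF nodes]) auto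
  then have below_t_k: "y - t k < 0" if "i < k"
    using that gap by (fastforce simp: in_gap_def)
  show "0 \<le> poly (pderiv p) y" if i: "i = k \<or> i \<in> {1..<k} - {j} \<and> y \<le> \<xi> i"
  proof (cases "i = k")
    case True
    then show ?thesis using N gap j c by (simp add: g_def S_def in_gap_def)
  next
    case False
    then have "i \<in> S" "t i \<le> y" "y \<le> \<xi> i" "y - t k < 0"
      using i gap below_t_k by (auto simp: S_def in_gap_def)
    then have "g \<le> 0" by (simp add: g_def mult_nonneg_nonpos)
    then have "0 \<le> c * (y - t k) * g"
      using \<open>y - t k < 0\<close> c by (intro mult_nonpos_nonpos mult_nonneg_nonpos) simp_all
    then show ?thesis using N by simp
  qed
  show "poly (pderiv p) y \<le> 0" if "i < k" "i \<in> {1..<k} - {j} \<Longrightarrow> \<xi> i \<le> y"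
  proof -
    have "y - t k < 0" "0 \<le> g"
      using that gap below_t_k \<xi>[of i] by (auto simp: g_def S_def in_gap_def)
    then have "c * (y - t k) * g \<le> 0"
      using c by (intro mult_nonpos_nonneg mult_nonneg_nonpos) simp_all
    then show ?thesis using N by (simp add: mult_nonpos_nonneg)
  qed
qed

lemma hermite_step_poly_ge_indicator: "indicator {..t j} x \<le> poly p x"
proof -
  obtain \<xi> c where \<xi>: "\<And>i. i \<in> {1..<k} - {j} \<Longrightarrow> t i < \<xi> i \<and> \<xi> i < t (Suc i)"
    and p': "\<And>x. poly (pderiv p) x = c * (x - t k) * (\<Prod>i\<in>{1..<k} - {j}. (x - t i) * (x - \<xi> i))"
    using hermite_step_pderiv_eq by blast
  note up = hermite_step_pderiv_nonneg_in_gap[OF \<xi> p']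
  note down = hermite_step_pderiv_nonpos_in_gap[OF \<xi> p']
  obtain i where gap: "in_gap k t i x" using ex_in_gap by blast
  have "of_bool (i < j) \<le> poly p x"
  proof -
    consider "i = 0" | "i = k" | "1 \<le> i" "i \<in> {1..<k} - {j}" "x \<le> \<xi> i"
      | "1 \<le> i" "i < k" "i \<in> {1..<k} - {j} \<Longrightarrow> \<xi> i < x"
      using gap by (fastforce simp: in_gap_def)
    then show ?thesis
    proof cases
      case 1
      then have "poly p (t 1) \<le> poly p x"
        using gap j by (intro poly_antimono_if_pderiv_nonpos down[of 0]) (auto simp: in_gap_def)
      then show ?thesis using val j by simp
    next
      case 2
      then have "poly p (t k) \<le> poly p x"
        using gap j by (intro poly_mono_if_pderiv_nonneg up[of k]) (auto simp: in_gap_def)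
      then show ?thesis using val j 2 by simp
    next
      case 3
      then have "poly p (t i) \<le> poly p x"
        using gap by (intro poly_mono_if_pderiv_nonneg up[of i]) (auto simp: in_gap_def)
      then show ?thesis using val 3 by (cases "i < j") auto
    next
      case 4
      then have "poly p (t (Suc i)) \<le> poly p x"
        using gap by (intro poly_antimono_if_pderiv_nonpos down[of i]) (force simp: in_gap_def)+
      then show ?thesis using val 4 by (cases "i < j") auto
    qed
  qed
  moreover have "indicator {..t j} x \<le> (of_bool (i < j) :: real)" if "x \<noteq> t j"
    using that node_le_iff_in_gap[OF nodes gap, of j] j by (auto simp: indicator_def)
  moreover have "poly p (t j) = 1" using val j by simp
  ultimately show ?thesis by (cases "x = t j") auto
qed

end

lemma step_majorant:
  fixes t :: "nat \<Rightarrow> real"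
  assumes t: "strict_mono_on {1..k} t" and j: "j \<in> {1..k}"
  obtains p where "degree p \<le> 2*k - 2" "\<And>x. indicator {..t j} x \<le> poly p x"
    "\<And>i. i \<in> {1..k} \<Longrightarrow> poly p (t i) = of_bool (i \<le> j)"
proof (cases "j = k")
  case True
  then show ?thesis by (intro that[of 1]) (auto simp: indicator_def)
next
  case False
  with j obtain p where "degree p \<le> 2*k - 2"
    "\<And>i. i \<in> {1..k} \<Longrightarrow> poly p (t i) = of_bool (i \<le> j)"
    "\<And>i. i \<in> {1..k} - {j} \<Longrightarrow> poly (pderiv p) (t i) = 0"
    using hermite_step_poly[OF strict_mono_on_imp_inj_on[OF t], of j] by auto
  with False j show ?thesis
    by (intro that[of p] hermite_step_poly_ge_indicator[OF t]) auto
qed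

lemma step_minorant:
  fixes t :: "nat \<Rightarrow> real"
  assumes t: "strict_mono_on {1..k} t" and j: "j \<in> {1..k}"
  obtains q where "degree q \<le> 2*k - 2" "\<And>x. indicator {t j..} x \<le> poly q x"
    "\<And>i. i \<in> {1..k} \<Longrightarrow> poly q (t i) = of_bool (j \<le> i)"
proof -
  define s where "s i = - t (Suc k - i)" for i
  have "strict_mono_on {1..k} s"
    by (rule strict_mono_onI) (auto simp: s_def intro!: strict_mono_onD[OF t])
  moreover have "Suc k - j \<in> {1..k}" using j by auto
  ultimately obtain p where p: "degree p \<le> 2*k - 2" "\<And>x. indicator {..s (Suc k - j)} x \<le> poly p x"
    "\<And>i. i \<in> {1..k} \<Longrightarrow> poly p (s i) = of_bool (i \<le> Suc k - j)"
    using step_majorant by blast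
  define q where "q = pcompose p [:0, -1:]"
  have q: "poly q x = poly p (- x)" for x by (simp add: q_def poly_pcompose)
  show ?thesis
  proof (rule that)
    show "degree q \<le> 2*k - 2" using p(1) by (simp add: q_def degree_pcompose)
    show "indicator {t j..} x \<le> poly q x" for x
      using p(2)[of "-x"] j by (simp add: q s_def indicator_def)
    show "poly q (t i) = of_bool (j \<le> i)" if "i \<in> {1..k}" for i
    proof -
      have "Suc k - i \<in> {1..k}" "Suc k - i \<le> Suc k - j \<longleftrightarrow> j \<le> i" using that j by auto
      then show ?thesis using p(3)[of "Suc k - i"] that by (simp add: q s_def)
    qed
  qed
qed

section \<open>Gaussian quadrature and distribution functions\<close>

lemma integrable_poly_if_monomials:
  fixes M :: "real measure" and p :: "real poly"
  assumes "\<And>m. m \<le> n \<Longrightarrow> integrable M (\<lambda>x. x ^ m)" and "degree p \<le> n"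
  shows "integrable M (poly p)"
proof -
  have "integrable M (\<lambda>x. \<Sum>i\<le>degree p. coeff p i * x ^ i)"
    using assms by (intro Bochner_Integration.integrable_sum integrable_mult_right) auto
  then show ?thesis by (simp add: poly_altdef[abs_def])
qed

lemma quad_df_in_gap:
  assumes "strict_mono_on {1..k} t" "in_gap k t i x"
  shows "quad_df k t d x = (\<Sum>i'\<in>{1..i}. d i')"
proof -
  have "i \<le> k" using assms(2) by (simp add: in_gap_def)
  then show ?thesis
    unfolding quad_df_def using node_le_iff_in_gap[OF assms]
    by (intro sum.mono_neutral_cong_right) auto
qed

lemma d_KS_le:
  assumes "\<And>x. \<bar>F x - G x\<bar> \<le> C"
  shows "d_KS F G \<le> C"
  unfolding d_KS_def using assms by (intro cSUP_least) auto

lemma d_W_le_step: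
  fixes c u v :: "nat \<Rightarrow> real"
  assumes "finite J" "\<And>j. j \<in> J \<Longrightarrow> 0 \<le> c j" "\<And>j. j \<in> J \<Longrightarrow> c j = 0 \<or> u j \<le> v j"
    and "\<And>x. \<bar>F x - G x\<bar> \<le> (\<Sum>j\<in>J. c j * indicator {u j..<v j} x)"
  shows "d_W F G \<le> ennreal (\<Sum>j\<in>J. c j * (v j - u j))"
proof -
  have "d_W F G \<le> (\<integral>\<^sup>+x. ennreal (\<Sum>j\<in>J. c j * indicator {u j..<v j} x) \<partial>lborel)"
    unfolding d_W_def using assms(4) by (intro nn_integral_mono ennreal_leI)
  also have "\<dots> = (\<integral>\<^sup>+x. (\<Sum>j\<in>J. ennreal (c j) * indicator {u j..<v j} x) \<partial>lborel)"
    using assms(2) by (intro nn_integral_cong)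
      (simp add: sum_ennreal[symmetric] ennreal_mult' ennreal_indicator)
  also have "\<dots> = (\<Sum>j\<in>J. ennreal (c j) * emeasure lborel {u j..<v j})"
    using assms(1) by (subst nn_integral_sum) (simp_all add: nn_integral_cmult_indicator)
  also have "\<dots> = (\<Sum>j\<in>J. ennreal (c j * (v j - u j)))"
  proof (rule sum.cong)
    fix j assume "j \<in> J"
    then show "ennreal (c j) * emeasure lborel {u j..<v j} = ennreal (c j * (v j - u j))"
      using assms(2,3)[of j] by (cases "c j = 0") (auto simp: ennreal_mult)
  qed simp
  also have "\<dots> = ennreal (\<Sum>j\<in>J. c j * (v j - u j))"
    using assms(2,3) by (intro sum_ennreal) force
  finally show ?thesis .
qed

context real_distribution
begin

lemma AE_ge_if_cdf_const_below:
  assumes "\<And>x y. x < a \<Longrightarrow> y < a \<Longrightarrow> cdf M x = cdf M y"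
  shows "AE x in M. a \<le> x"
proof -
  have "cdf M x = 0" if "x < a" for x
  proof -
    have "eventually (\<lambda>y. cdf M y = cdf M x) at_bot"
      unfolding eventually_at_bot_linorder using that by (intro exI[of _ x] allI impI assms) auto
    then have "(cdf M \<longlongrightarrow> cdf M x) at_bot" by (rule tendsto_eventually)
    with cdf_lim_at_bot show ?thesis by (intro tendsto_unique) simp_all
  qed
  then have "eventually (\<lambda>y. cdf M y = 0) (at_left a)"
    by (intro eventually_at_leftI[of "a - 1"]) auto
  then have "(cdf M \<longlongrightarrow> 0) (at_left a)" by (rule tendsto_eventually)
  with cdf_at_left have "measure M {..<a} = 0" by (intro tendsto_unique) simp_all
  then have "{..<a} \<in> null_sets M" by (simp add: emeasure_eq_measure null_setsI)
  then show ?thesis by (rule AE_I') auto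
qed

lemma AE_le_if_cdf_const_above:
  assumes "\<And>x y. b < x \<Longrightarrow> b < y \<Longrightarrow> cdf M x = cdf M y"
  shows "AE x in M. x \<le> b"
proof -
  have "cdf M x = 1" if "b < x" for x
  proof -
    have "eventually (\<lambda>y. cdf M y = cdf M x) at_top"
      unfolding eventually_at_top_linorder using that by (intro exI[of _ x] allI impI assms) auto
    then have "(cdf M \<longlongrightarrow> cdf M x) at_top" by (rule tendsto_eventually)
    with cdf_lim_at_top_prob show ?thesis by (intro tendsto_unique) simp_all
  qed
  then have "eventually (\<lambda>y. cdf M y = 1) (at_right b)"
    by (intro eventually_at_rightI[of _ "b + 1"]) auto
  then have "(cdf M \<longlongrightarrow> 1) (at_right b)" by (rule tendsto_eventually)
  with cdf_is_right_cont[of b] have "cdf M b = 1"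
    unfolding continuous_within by (intro tendsto_unique) simp_all
  then have "measure M (space M - {..b}) = 0" using prob_compl[of "{..b}"] by (simp add: cdf_def)
  then have "space M - {..b} \<in> null_sets M" by (simp add: emeasure_eq_measure null_setsI)
  then show ?thesis by (rule AE_I') auto
qed

end

locale gauss_quadrature = real_distribution M for M :: "real measure" +
  fixes k :: nat and t d :: "nat \<Rightarrow> real"
  assumes nodes: "strict_mono_on {1..k} t"
    and weights_nonneg: "\<And>i. i \<in> {1..k} \<Longrightarrow> 0 \<le> d i"
    and integrable_poly: "\<And>p. degree p \<le> 2*k - 1 \<Longrightarrow> integrable M (poly p)"
    and integral_poly:
      "\<And>p. degree p \<le> 2*k - 1 \<Longrightarrow> integral\<^sup>L M (poly p) = (\<Sum>i\<in>{1..k}. d i * poly p (t i))"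
begin

lemma sum_weights: "(\<Sum>i\<in>{1..k}. d i) = 1"
proof -
  have "poly 1 = (\<lambda>_::real. 1)" by auto
  then show ?thesis using integral_poly[of 1] prob_space by simp
qed

lemma cdf_node_le_sum_weights:
  assumes "j \<in> {1..k}"
  shows "cdf M (t j) \<le> (\<Sum>i\<in>{1..j}. d i)"
proof -
  obtain p where p: "degree p \<le> 2*k - 2" "\<And>x. indicator {..t j} x \<le> poly p x"
    "\<And>i. i \<in> {1..k} \<Longrightarrow> poly p (t i) = of_bool (i \<le> j)"
    using step_majorant[OF nodes assms] by blast
  then have "degree p \<le> 2*k - 1" by simp
  have "cdf M (t j) = integral\<^sup>L M (indicator {..t j})" by (simp add: cdf_def)
  also have "\<dots> \<le> integral\<^sup>L M (poly p)"
  proof (intro integral_mono' integrable_poly[OF \<open>degree p \<le> 2*k - 1\<close>])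
    show "0 \<le> poly p x" for x by (rule order_trans[OF _ p(2)]) simp
  qed (use p(2) in auto)
  also have "\<dots> = (\<Sum>i\<in>{1..k}. d i * of_bool (i \<le> j))"
    using integral_poly[OF \<open>degree p \<le> 2*k - 1\<close>] p(3) by simp
  also have "\<dots> = (\<Sum>i\<in>{1..j}. d i)"
    using assms by (intro sum.mono_neutral_cong_right) auto
  finally show ?thesis .
qed

lemma sum_weights_le_measure_below_node:
  assumes "j \<in> {1..k}"
  shows "(\<Sum>i\<in>{1..<j}. d i) \<le> measure M {..<t j}"
proof -
  obtain q where q: "degree q \<le> 2*k - 2" "\<And>x. indicator {t j..} x \<le> poly q x"
    "\<And>i. i \<in> {1..k} \<Longrightarrow> poly q (t i) = of_bool (j \<le> i)"
    using step_minorant[OF nodes assms] by blast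
  then have deg: "degree (1 - q) \<le> 2*k - 1" using degree_diff_le[of 1 "2*k - 1" q] by simp
  have "(\<Sum>i\<in>{1..<j}. d i) = (\<Sum>i\<in>{1..k}. d i * poly (1 - q) (t i))"
    using assms q(3) by (intro sum.mono_neutral_cong_left) auto
  also have "\<dots> = integral\<^sup>L M (poly (1 - q))" using integral_poly[OF deg] by simp
  also have "\<dots> \<le> integral\<^sup>L M (indicator {..<t j})"
  proof (intro integral_mono integrable_poly[OF deg] integrable_real_indicator)
    show "poly (1 - q) x \<le> indicator {..<t j} x" for x
      using q(2)[of x] by (auto simp: indicator_def)
  qed (simp_all add: emeasure_eq_measure)
  finally show ?thesis by simp
qed

lemma nodes_nonempty: "1 \<le> k"
  using sum_weights by (cases k) auto

lemma poly_at_node_nonneg_if_AE_nonneg: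
  assumes L: "degree L \<le> 1" "AE x in M. 0 \<le> poly L x" and i: "i \<in> {1..k}" "0 < d i"
  shows "0 \<le> poly L (t i)"
proof -
  define R where "R = (\<Prod>i'\<in>{1..k} - {i}. [:-t i', 1:]^2)"
  have R_at: "poly R x = (\<Prod>i'\<in>{1..k} - {i}. (x - t i')^2)" for x
    by (simp add: R_def poly_prod)
  have R_zero: "poly R (t i') = 0" if "i' \<in> {1..k} - {i}" for i'
    unfolding R_at using that by (subst prod_zero_iff) auto
  have "degree R = 2 * (k - 1)"
    unfolding R_def using i by (subst degree_prod_sum_eq) (simp_all add: degree_linear_power)
  then have deg: "degree (L * R) \<le> 2*k - 1"
    using degree_mult_le[of L R] L(1) i by auto
  have "0 \<le> integral\<^sup>L M (poly (L * R))"
    using L(2) by (intro integral_nonneg_AE)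
      (auto simp: R_at elim!: eventually_mono intro!: mult_nonneg_nonneg prod_nonneg)
  also have "\<dots> = (\<Sum>i'\<in>{1..k}. d i' * poly (L * R) (t i'))"
    by (rule integral_poly[OF deg])
  also have "\<dots> = d i * poly (L * R) (t i)"
    using i(1) R_zero by (subst sum.remove[of _ i]) auto
  finally have "0 \<le> d i * poly L (t i) * poly R (t i)" by (simp add: mult.assoc)
  moreover have "0 < (t i - t i')^2" if "i' \<in> {1..k} - {i}" for i'
    using strict_mono_on_eqD[OF nodes, of i' i] that i(1) by auto
  then have "0 < poly R (t i)" unfolding R_at by (rule prod_pos)
  ultimately show ?thesis using i(2) by (simp add: zero_le_mult_iff)
qed

lemma node_ge_if_AE_ge:
  assumes "AE x in M. a \<le> x" "i \<in> {1..k}" "0 < d i"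
  shows "a \<le> t i"
  using poly_at_node_nonneg_if_AE_nonneg[of "[:-a, 1:]"] assms by simp

lemma node_le_if_AE_le:
  assumes "AE x in M. x \<le> b" "i \<in> {1..k}" "0 < d i"
  shows "t i \<le> b"
  using poly_at_node_nonneg_if_AE_nonneg[of "[:b, -1:]"] assms by simp

lemma abs_cdf_minus_quad_df_le:
  assumes "d 0 = 0" "d (Suc k) = 0" and gap: "in_gap k t i x"
  shows "\<bar>cdf M x - quad_df k t d x\<bar> \<le> max (d i) (d (Suc i))"
proof -
  have "cdf M x \<le> (\<Sum>i'\<in>{1..i}. d i') + d (Suc i)"
  proof (cases "i < k")
    case True
    then have "cdf M x \<le> cdf M (t (Suc i))"
      using gap by (intro cdf_nondecreasing) (simp add: in_gap_def)
    also have "\<dots> \<le> (\<Sum>i'\<in>{1..Suc i}. d i')" using True by (intro cdf_node_le_sum_weights) auto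
    finally show ?thesis by simp
  next
    case False
    then have "i = k" using gap by (simp add: in_gap_def)
    then show ?thesis using cdf_bounded_prob[of x] sum_weights assms(2) by simp
  qed
  moreover have "(\<Sum>i'\<in>{1..i}. d i') - d i \<le> cdf M x"
  proof (cases "i = 0")
    case True
    then show ?thesis using cdf_nonneg[of x] assms(1) by simp
  next
    case False
    then have "(\<Sum>i'\<in>{1..i}. d i') = d i + (\<Sum>i'\<in>{1..<i}. d i')"
      by (subst atLeastLessThanSuc_atLeastAtMost[symmetric]) simp
    moreover have "(\<Sum>i'\<in>{1..<i}. d i') \<le> measure M {..<t i}"
      using False gap by (intro sum_weights_le_measure_below_node) (auto simp: in_gap_def)
    moreover have "measure M {..<t i} \<le> cdf M x"
      using False gap unfolding cdf_def by (intro finite_measure_mono) (auto simp: in_gap_def)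
    ultimately show ?thesis by simp
  qed
  ultimately show ?thesis
    using quad_df_in_gap[OF nodes gap, of d] by (simp add: abs_le_iff) linarith
qed

lemma quad_df_eq_cdf_outside:
  assumes supp: "AE x in M. a \<le> x" "AE x in M. x \<le> b" and x: "x < a \<or> b \<le> x"
  shows "quad_df k t d x = cdf M x"
  using x
proof
  assume "x < a"
  have "d i * (if t i \<le> x then 1 else 0) = 0" if "i \<in> {1..k}" for i
    using node_ge_if_AE_ge[OF supp(1) that] weights_nonneg[OF that] \<open>x < a\<close> by force
  then have "quad_df k t d x = 0" unfolding quad_df_def by (intro sum.neutral) auto
  moreover have "AE y in M. y \<notin> {..x}"
    using supp(1) by eventually_elim (use \<open>x < a\<close> in auto)
  ultimately show ?thesis by (simp add: cdf_def prob_eq_0)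
next
  assume "b \<le> x"
  have "d i * (if t i \<le> x then 1 else 0) = d i" if "i \<in> {1..k}" for i
    using node_le_if_AE_le[OF supp(2) that] weights_nonneg[OF that] \<open>b \<le> x\<close> by force
  then have "quad_df k t d x = (\<Sum>i\<in>{1..k}. d i)" unfolding quad_df_def by (intro sum.cong refl)
  then have "quad_df k t d x = 1" using sum_weights by simp
  moreover have "AE y in M. y \<in> {..x}"
    using supp(2) by eventually_elim (use \<open>b \<le> x\<close> in auto)
  ultimately show ?thesis by (simp add: cdf_def prob_eq_1)
qed

lemma step_height_nonneg:
  assumes "d 0 = 0" "i \<le> k"
  shows "0 \<le> max (d i) (d (Suc i))"
  using assms weights_nonneg[of i] by (cases "i = 0") auto

lemma abs_cdf_minus_quad_df_le_step:
  assumes supp: "AE x in M. a \<le> x" "AE x in M. x \<le> b"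
    and ends: "t 0 = a" "t (Suc k) = b" "d 0 = 0" "d (Suc k) = 0"
  shows "\<bar>cdf M x - quad_df k t d x\<bar>
    \<le> (\<Sum>i\<in>{0..k}. max (d i) (d (Suc i)) * indicator {t i..<t (Suc i)} x)"
proof (cases "a \<le> x \<and> x < b")
  case True
  obtain i where gap: "in_gap k t i x" using ex_in_gap by blast
  then have "t i \<le> x" "x < t (Suc i)" "i \<in> {0..k}"
    using True ends unfolding in_gap_def by (cases "i = 0"; cases "i = k"; simp)+
  then show ?thesis
    using abs_cdf_minus_quad_df_le[OF ends(3,4) gap]
    by (intro order_trans[OF _ member_le_sum[of i]])
      (auto simp: indicator_def step_height_nonneg ends)
next
  case False
  then have "quad_df k t d x = cdf M x" by (intro quad_df_eq_cdf_outside[OF supp]) auto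
  then show ?thesis by (auto intro!: sum_nonneg step_height_nonneg ends)
qed

text \<open>Nodes of weight zero may lie outside \<open>[a, b]\<close>, so the first or the last interval
  \<open>[t i, t (i + 1))\<close> can be reversed; its height then vanishes.\<close>

lemma step_ordered:
  assumes supp: "AE x in M. a \<le> x" "AE x in M. x \<le> b"
    and ends: "t 0 = a" "t (Suc k) = b" "d 0 = 0" "d (Suc k) = 0"
    and i: "i \<le> k"
  shows "max (d i) (d (Suc i)) = 0 \<or> t i \<le> t (Suc i)"
proof -
  consider "i = 0" | "i = k" | "1 \<le> i" "i < k" using i by linarith
  then show ?thesis
  proof cases
    case 1
    then show ?thesis
      using node_ge_if_AE_ge[OF supp(1), of 1] weights_nonneg[of 1] nodes_nonempty ends by force
  next
    case 2
    then show ?thesis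
      using node_le_if_AE_le[OF supp(2), of k] weights_nonneg[of k] nodes_nonempty ends by force
  next
    case 3
    then show ?thesis by (auto intro: strict_mono_on_leD[OF nodes])
  qed
qed

lemma weight_le_Max:
  assumes "d 0 = 0" "d (Suc k) = 0" "i \<le> Suc k"
  shows "d i \<le> Max (d ` {1..k})"
proof (cases "i \<in> {1..k}")
  case False
  then have "i = 0 \<or> i = Suc k" using assms(3) by auto
  then have "d i = 0" using assms(1,2) by auto
  also have "0 \<le> d 1" using weights_nonneg nodes_nonempty by simp
  also have "d 1 \<le> Max (d ` {1..k})" using nodes_nonempty by (intro Max_ge) auto
  finally show ?thesis .
qed (intro Max_ge; auto)


lemma d_KS_cdf_quad_df_le:
  assumes "d 0 = 0" "d (Suc k) = 0"
  shows "d_KS (cdf M) (quad_df k t d) \<le> Max (d ` {1..k})"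
proof (rule d_KS_le)
  fix x
  obtain i where gap: "in_gap k t i x" using ex_in_gap by blast
  then have "\<bar>cdf M x - quad_df k t d x\<bar> \<le> max (d i) (d (Suc i))"
    by (rule abs_cdf_minus_quad_df_le[OF assms])
  also have "\<dots> \<le> Max (d ` {1..k})"
    using gap weight_le_Max[OF assms] by (simp add: in_gap_def)
  finally show "\<bar>cdf M x - quad_df k t d x\<bar> \<le> Max (d ` {1..k})" .
qed

lemma d_W_cdf_quad_df_le:
  assumes supp: "AE x in M. a \<le> x" "AE x in M. x \<le> b"
    and ends: "t 0 = a" "t (Suc k) = b" "d 0 = 0" "d (Suc k) = 0"
  shows "d_W (cdf M) (quad_df k t d)
    \<le> ennreal (\<Sum>i\<in>{0..k}. max (d i) (d (Suc i)) * (t (Suc i) - t i))"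
proof (rule d_W_le_step)
  show "0 \<le> max (d i) (d (Suc i))" if "i \<in> {0..k}" for i
    using step_height_nonneg[OF ends(3)] that by simp
  show "max (d i) (d (Suc i)) = 0 \<or> t i \<le> t (Suc i)" if "i \<in> {0..k}" for i
    using step_ordered[OF supp ends] that by simp
qed (use abs_cdf_minus_quad_df_le_step[OF supp ends] in simp_all)
end

lemma gauss_quadrature_interval_measure:
  assumes "is_distribution_function F" "is_GQ k F t d"
  shows "gauss_quadrature (interval_measure F) k t d"
proof -
  have "real_distribution (interval_measure F)"
    using assms(1) unfolding is_distribution_function_def mono_def
    by (intro real_distribution_interval_measure) auto
  moreover have "gauss_quadrature_axioms (interval_measure F) k t d"
    using assms(2) unfolding is_GQ_def
    by unfold_locales (auto simp: strict_mono_on_def intro: integrable_poly_if_monomials)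
  ultimately show ?thesis by (intro gauss_quadrature.intro)
qed

theorem corollary2:
  fixes a b :: real and \<mu> :: "real \<Rightarrow> real" and k :: nat
    and \<theta> d :: "nat \<Rightarrow> real"
  assumes "a < b"
    and "is_distribution_function \<mu>"
    and "\<forall>x y. x < a \<longrightarrow> y < a \<longrightarrow> \<mu> x = \<mu> y"
    and "\<forall>x y. b < x \<longrightarrow> b < y \<longrightarrow> \<mu> x = \<mu> y"
    and "1 \<le> k"
    and "is_GQ k \<mu> \<theta> d"
    and "\<theta> 0 = a" and "\<theta> (k+1) = b" and "d 0 = 0" and "d (k+1) = 0"
  shows "d_KS \<mu> (quad_df k \<theta> d) \<le> Max (d ` {1..k}) \<and>
         d_W \<mu> (quad_df k \<theta> d)
           \<le> ennreal (\<Sum>j\<in>{0..k}. max (d j) (d (j+1)) * (\<theta> (j+1) - \<theta> j))"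
proof -
  interpret gauss_quadrature "interval_measure \<mu>" k \<theta> d
    using assms(2,6) by (rule gauss_quadrature_interval_measure)
  have cdf: "cdf (interval_measure \<mu>) = \<mu>"
    using assms(2) unfolding is_distribution_function_def mono_def
    by (intro cdf_interval_measure) auto
  have "AE x in interval_measure \<mu>. a \<le> x"
    using assms(3) by (intro AE_ge_if_cdf_const_below) (unfold cdf, blast)
  moreover have "AE x in interval_measure \<mu>. x \<le> b"
    using assms(4) by (intro AE_le_if_cdf_const_above) (unfold cdf, blast)
  ultimately have supp: "AE x in interval_measure \<mu>. a \<le> x" "AE x in interval_measure \<mu>. x \<le> b" .
  have ends: "\<theta> 0 = a" "\<theta> (Suc k) = b" "d 0 = 0" "d (Suc k) = 0" using assms(7-10) by simp_all
  show ?thesis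
    using d_KS_cdf_quad_df_le[OF ends(3,4)] d_W_cdf_quad_df_le[OF supp ends] by (simp add: cdf)
qed

end
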